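(* Let $f,g\colon\mathbb{R}^3\to\mathbb{R}$ be globally Lipschitz with $|f|,|g|<M$, and consider for $\varepsilon>0$ the system \[ \dot x = f(x,y,z),\qquad \dot y = g(x,y,z),\qquad \varepsilon\dot z = x+|z|. \] Assume the setting described in the context, let $\alpha>0$ be sufficiently small, $(x_0,y_0)\in\Pi(\alpha)$, and let $(x_\varepsilon(t),y_\varepsilon(t),z_\varepsilon(t))$ be the solution with $x(\tau)=x_0$, $y(\tau)=y_0$, $z(\tau)=0$. Put $T=-T_a+T_r$, $\omega=\varepsilon\ln(T/\varepsilon)$, \[ \hat t=\min\bigl(\{T_r\}\cup\{t>\tau: z_\varepsilon(t)=0\}\bigr),\qquad t_1=\tau+\varepsilon\ln\Bigl(-\frac{x_0}{M\varepsilon}\Bigr). \] Then for all sufficiently small $\varepsilon>0$: $t_1<\tau+\omega$, $\hat t>t_1$, and $|z_\varepsilon(t)-x_\varepsilon(t)|<2M\varepsilon$ for $t_1\le t\le\hat t$.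
   Context: Setting: $f(0,0,0)=0$, $g(0,0,0)>0$, $y f(0,y,0)<0$ for $y\ne0$. Let $f_a(x,y)=f(x,y,x)$, $g_a(x,y)=g(x,y,x)$, $f_r(x,y)=f(x,y,-x)$, $g_r(x,y)=g(x,y,-x)$. Let $w_a^*(t)=(x_a^*,y_a^* )$ solve $\dot x=f_a,\dot y=g_a$ and $w_r^*(t)=(x_r^*,y_r^* )$ solve $\dot x=f_r,\dot y=g_r$, both with $x(0)=y(0)=0$. $T_a<0<T_r$ are such that $x_a^*(t)<0$ on $(T_a,0)$ and $x_r^*(t)<0$ on $(0,T_r)$. There are $T_a<\tau<0<\sigma<T_r$ with $w_a^*(\tau)=w_r^*(\sigma)=(x^*,y^* )$, and $A=f_ag_r-f_rg_a$ evaluated at $(x^*,y^* )$ is nonzero. Near $(x^*,y^* )$ define $u(x,y)$ as the (small) time such that the solution of $\dot x=f_a,\dot y=g_a$ starting at $(x,y)$ at time $0$ lies on the curve $\{w_r^*(t)\}$ at time $u(x,y)$, and $v(x,y)$ as the (small) time such that the solution of $\dot x=f_r,\dot y=g_r$ starting at $(x,y)$ at time $0$ lies on the curve $\{w_a^*(t)\}$ at time $v(x,y)$ (well defined near $(x^*,y^* )$ by transversality). For small $\alpha>0$, $\Pi(\alpha)=\{(x,y): |u(x,y)|<\alpha/2,\ |v(x,y)|<\alpha/2\}$. *)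

theory Defs
  imports "HOL-Analysis.Analysis"
begin

definition is_sol2 :: "(real \<Rightarrow> real \<Rightarrow> real) \<Rightarrow> (real \<Rightarrow> real \<Rightarrow> real) \<Rightarrow> (real \<Rightarrow> real \<times> real) \<Rightarrow> bool" where
  "is_sol2 F G \<phi> \<longleftrightarrow>
     (\<forall>t. (\<phi> has_vector_derivative (F (fst (\<phi> t)) (snd (\<phi> t)), G (fst (\<phi> t)) (snd (\<phi> t)))) (at t))"

text \<open>The flow: value at time s of the (unique, for Lipschitz F G) global solution with
  initial value p at time 0.\<close>
definition flow2 :: "(real \<Rightarrow> real \<Rightarrow> real) \<Rightarrow> (real \<Rightarrow> real \<Rightarrow> real) \<Rightarrow> real \<times> real \<Rightarrow> real \<Rightarrow> real \<times> real" where
  "flow2 F G p s = (THE \<phi>. \<phi> 0 = p \<and> is_sol2 F G \<phi>) s"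

end

theory Submission
  imports Defs "HOL-Real_Asymp.Real_Asymp"
begin

text \<open>
  Below the slow manifold \<open>z = 0\<close> the fast equation reads \<open>\<epsilon> (z - x)' = -(z - x) - \<epsilon> x'\<close>, and
  \<open>|x'| < M\<close>; hence \<open>exp ((t - \<tau>) / \<epsilon>) (z - x)\<close> moves at a rate below \<open>M exp ((t - \<tau>) / \<epsilon>)\<close>.
  Starting from \<open>z - x = - x0 > 0\<close>, the difference \<open>z - x\<close> therefore stays within \<open>M \<epsilon>\<close> of
  \<open>- x0 exp (- (t - \<tau>) / \<epsilon>)\<close>, a term that drops below \<open>M \<epsilon>\<close> exactly at \<open>t1\<close>; from then on
  \<open>|z - x| < 2 M \<epsilon>\<close>. Up to \<open>t1\<close> the slow variable has moved by at most
  \<open>M (t1 - \<tau>) = O(\<epsilon> ln (1 / \<epsilon>))\<close>, too little for \<open>z\<close> to return to zero, so the first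
  return of \<open>z\<close> to zero comes after \<open>t1\<close>.

  The slow flow enters only through \<open>|x\<^sup>*| < M |\<tau>| < M T\<close>, which gives \<open>- x0 < M T\<close> and
  thus \<open>t1 < \<tau> + \<omega>\<close> for \<open>x0\<close> near \<open>x\<^sup>*\<close>. Since \<open>w\<^sub>a\<close> is defined by a definite description,
  this needs existence and uniqueness of global solutions for globally Lipschitz fields,
  which follow from Picard iteration and a Gronwall estimate.
\<close>

section \<open>Globally Lipschitz ODEs and the slow flow\<close>

primrec picard_iter :: "('a::banach \<Rightarrow> 'a) \<Rightarrow> 'a \<Rightarrow> nat \<Rightarrow> real \<Rightarrow> 'a" where
  "picard_iter H p 0 = (\<lambda>t. p)"
| "picard_iter H p (Suc n) = (\<lambda>t. p + integral {0..t} (\<lambda>s. H (picard_iter H p n s)))"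

lemma has_integral_power_over_fact:
  assumes "0 \<le> (t::real)"
  shows "((\<lambda>s. c * s ^ n / fact n) has_integral c * t ^ Suc n / fact (Suc n)) {0..t}"
proof -
  have "((\<lambda>s. c * s ^ Suc n / fact (Suc n)) has_vector_derivative c * x ^ n / fact n) (at x within {0..t})"
    for x :: real
  proof -
    have "((\<lambda>s. s ^ Suc n) has_real_derivative real (Suc n) * x ^ n) (at x within {0..t})"
      using DERIV_pow[of "Suc n" x] by simp
    then have "((\<lambda>s. c * s ^ Suc n / fact (Suc n)) has_real_derivative c * (real (Suc n) * x ^ n) / fact (Suc n))
        (at x within {0..t})"
      by (intro DERIV_cdivide DERIV_cmult)
    moreover have "c * (real (Suc n) * x ^ n) / fact (Suc n) = c * x ^ n / fact n"
      by (simp add: fact_Suc divide_simps del: of_nat_Suc)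
    ultimately show ?thesis by (simp add: has_real_derivative_iff_has_vector_derivative)
  qed
  from fundamental_theorem_of_calculus[OF assms this] show ?thesis by simp
qed

context
  fixes H :: "'a::banach \<Rightarrow> 'a" and L :: real and p :: 'a
  assumes lip: "L-lipschitz_on UNIV H" and L_pos: "0 < L"
begin

lemma continuous_on_picard_iter: "continuous_on {0..R} (picard_iter H p n)"
proof (induction n)
  case (Suc n)
  have "continuous_on {0..R} (\<lambda>s. H (picard_iter H p n s))"
    using continuous_on_compose2[OF lipschitz_on_continuous_on[OF lip] Suc] by auto
  then show ?case
    by (auto intro!: continuous_intros indefinite_integral_continuous_1 integrable_continuous_interval)
qed simp

lemma integrable_picard_iter: "(\<lambda>s. H (picard_iter H p n s)) integrable_on {0..t}"
  by (rule integrable_continuous_interval, rule continuous_on_compose2[OF lipschitz_on_continuous_on[OF lip]])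
    (auto intro: continuous_on_picard_iter)

lemma picard_iter_step_bound:
  assumes "0 \<le> t"
  shows "norm (picard_iter H p (Suc n) t - picard_iter H p n t) \<le> norm (H p) * L ^ n * t ^ Suc n / fact (Suc n)"
  using assms
proof (induction n arbitrary: t)
  case 0
  have "norm (integral {0..t} (\<lambda>s. H p)) \<le> integral {0..t} (\<lambda>s. norm (H p) * s ^ 0 / fact 0)"
    using has_integral_power_over_fact[OF 0, of "norm (H p)" 0]
    by (intro integral_norm_bound_integral) (auto simp: has_integral_integrable)
  also have "\<dots> = norm (H p) * t ^ Suc 0 / fact (Suc 0)"
    using has_integral_power_over_fact[OF 0] by (rule integral_unique)
  finally show ?case by simp
next
  case (Suc n)
  let ?P = "picard_iter H p"
  let ?c = "norm (H p) * L ^ Suc n"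
  have "?P (Suc (Suc n)) t - ?P (Suc n) t
      = integral {0..t} (\<lambda>s. H (?P (Suc n) s)) - integral {0..t} (\<lambda>s. H (?P n s))"
    by (simp only: picard_iter.simps(2)) simp
  also have "\<dots> = integral {0..t} (\<lambda>s. H (?P (Suc n) s) - H (?P n s))"
    by (intro integral_diff[symmetric] integrable_picard_iter)
  also have "norm \<dots> \<le> integral {0..t} (\<lambda>s. ?c * s ^ Suc n / fact (Suc n))"
  proof (intro integral_norm_bound_integral integrable_diff integrable_picard_iter)
    show "(\<lambda>s. ?c * s ^ Suc n / fact (Suc n)) integrable_on {0..t}"
      using has_integral_power_over_fact[OF Suc.prems] by (rule has_integral_integrable)
    fix s assume s: "s \<in> {0..t}"
    have "norm (H (?P (Suc n) s) - H (?P n s)) \<le> L * norm (?P (Suc n) s - ?P n s)"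
      using lipschitz_on_normD[OF lip] by simp
    also have "\<dots> \<le> L * (norm (H p) * L ^ n * s ^ Suc n / fact (Suc n))"
      using Suc.IH[of s] s L_pos by (intro mult_left_mono) auto
    finally show "norm (H (?P (Suc n) s) - H (?P n s)) \<le> ?c * s ^ Suc n / fact (Suc n)"
      by (simp add: algebra_simps)
  qed
  also have "\<dots> = ?c * t ^ Suc (Suc n) / fact (Suc (Suc n))"
    using has_integral_power_over_fact[OF Suc.prems] by (rule integral_unique)
  finally show ?case .
qed

lemma uniform_limit_picard_iter:
  "uniform_limit {0..R} (picard_iter H p) (\<lambda>t. lim (\<lambda>n. picard_iter H p n t)) sequentially"
proof -
  let ?P = "picard_iter H p"
  define D where "D i t = ?P (Suc i) t - ?P i t" for i t
  define B where "B i = norm (H p) * L ^ i * R ^ Suc i / fact (Suc i)" for i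
  have "uniform_limit {0..R} (\<lambda>n t. \<Sum>i<n. D i t) (\<lambda>t. \<Sum>i. D i t) sequentially"
  proof (rule Weierstrass_m_test)
    fix i t assume t: "t \<in> {0..R}"
    have "norm (D i t) \<le> norm (H p) * L ^ i * t ^ Suc i / fact (Suc i)"
      unfolding D_def using picard_iter_step_bound t by simp
    also have "\<dots> \<le> B i"
      unfolding B_def using t L_pos by (intro divide_right_mono mult_left_mono power_mono) auto
    finally show "norm (D i t) \<le> B i" .
  next
    have "summable (\<lambda>i. (norm (H p) / L) * (inverse (fact (i + 1)) * (L * R) ^ (i + 1)))"
      by (intro summable_mult summable_ignore_initial_segment[OF summable_exp])
    moreover have "(norm (H p) / L) * (inverse (fact (i + 1)) * (L * R) ^ (i + 1)) = B i" for i
      unfolding B_def using L_pos by (simp add: power_mult_distrib field_simps)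
    ultimately show "summable B" by simp
  qed
  then have "uniform_limit {0..R} (\<lambda>n t. p + (\<Sum>i<n. D i t)) (\<lambda>t. p + (\<Sum>i. D i t)) sequentially"
    by (intro uniform_limit_add uniform_limit_const)
  moreover have "(\<lambda>t. p + (\<Sum>i<n. D i t)) = ?P n" for n
  proof
    fix t
    have "(\<Sum>i<n. D i t) = ?P n t - ?P 0 t" unfolding D_def by (rule sum_lessThan_telescope)
    then show "p + (\<Sum>i<n. D i t) = ?P n t" by simp
  qed
  ultimately have lim: "uniform_limit {0..R} ?P (\<lambda>t. p + (\<Sum>i. D i t)) sequentially"
    by simp
  have "lim (\<lambda>n. ?P n t) = p + (\<Sum>i. D i t)" if "t \<in> {0..R}" for t
    using tendsto_uniform_limitI[OF lim that] by (rule limI)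
  then have "uniform_limit {0..R} ?P (\<lambda>t. lim (\<lambda>n. ?P n t)) sequentially
      \<longleftrightarrow> uniform_limit {0..R} ?P (\<lambda>t. p + (\<Sum>i. D i t)) sequentially"
    by (intro uniform_limit_cong') auto
  with lim show ?thesis by simp
qed

lemma picard_limit_integral_eq:
  assumes "0 \<le> t"
  shows "lim (\<lambda>n. picard_iter H p n t) = p + integral {0..t} (\<lambda>s. H (lim (\<lambda>n. picard_iter H p n s)))"
proof -
  let ?P = "picard_iter H p" and ?\<phi> = "\<lambda>t. lim (\<lambda>n. picard_iter H p n t)"
  have "uniform_limit {0..t} (\<lambda>n s. H (?P n s)) (\<lambda>s. H (?\<phi> s)) sequentially"
    by (rule uniform_limit_compose_uniformly_continuous_on[OF uniform_limit_picard_iter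
          lipschitz_on_uniformly_continuous[OF lip]]) auto
  moreover have "continuous_on {0..t} (\<lambda>s. H (?P n s))" for n
    by (rule continuous_on_compose2[OF lipschitz_on_continuous_on[OF lip] continuous_on_picard_iter]) auto
  ultimately obtain I J where I: "\<And>n. ((\<lambda>s. H (?P n s)) has_integral I n) {0..t}"
      and J: "((\<lambda>s. H (?\<phi> s)) has_integral J) {0..t}" and IJ: "I \<longlonglongrightarrow> J"
    using uniform_limit_integral[OF _ _ trivial_limit_sequentially] by blast
  have "(\<lambda>n. ?P (Suc n) t) \<longlonglongrightarrow> ?\<phi> t"
    using LIMSEQ_Suc[OF tendsto_uniform_limitI[OF uniform_limit_picard_iter[of t], of t]] assms by simp
  moreover have "(\<lambda>n. ?P (Suc n) t) = (\<lambda>n. p + I n)"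
    by (simp add: integral_unique[OF I])
  ultimately have "(\<lambda>n. p + I n) \<longlonglongrightarrow> ?\<phi> t" by simp
  moreover have "(\<lambda>n. p + I n) \<longlonglongrightarrow> p + J" by (intro tendsto_add tendsto_const IJ)
  ultimately show ?thesis using J by (simp add: LIMSEQ_unique integral_unique)
qed

lemma lipschitz_ode_forward_solution:
  defines "\<phi> \<equiv> \<lambda>t. lim (\<lambda>n. picard_iter H p n t)"
  shows "\<phi> 0 = p" and "0 \<le> t \<Longrightarrow> (\<phi> has_vector_derivative H (\<phi> t)) (at t within {0..})"
proof -
  show "\<phi> 0 = p" using picard_limit_integral_eq[of 0] unfolding \<phi>_def by simp
  assume t: "0 \<le> t"
  have "continuous_on {0..t + 1} \<phi>"
    unfolding \<phi>_def by (rule uniform_limit_theorem[OF always_eventually uniform_limit_picard_iter])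
      (auto intro: continuous_on_picard_iter)
  then have "continuous_on {0..t + 1} (\<lambda>s. H (\<phi> s))"
    by (rule continuous_on_compose2[OF lipschitz_on_continuous_on[OF lip]]) auto
  then have "((\<lambda>u. p + integral {0..u} (\<lambda>s. H (\<phi> s))) has_vector_derivative H (\<phi> t)) (at t within {0..t + 1})"
    using t by (auto intro!: derivative_eq_intros integral_has_vector_derivative)
  then have "(\<phi> has_vector_derivative H (\<phi> t)) (at t within {0..t + 1})"
    by (rule has_vector_derivative_transform[rotated 2])
      (use t in \<open>auto simp: \<phi>_def picard_limit_integral_eq\<close>)
  moreover have "at t within {0..t + 1} = at t within {0..}"
    by (rule at_within_nhd[of t "{..<t + 1}"]) auto
  ultimately show "(\<phi> has_vector_derivative H (\<phi> t)) (at t within {0..})" by simp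
qed

end

text \<open>The backward half of the solution is the forward solution of \<open>- H\<close>, run in reversed time.\<close>

lemma lipschitz_ode_solution_exists:
  fixes H :: "'a::banach \<Rightarrow> 'a"
  assumes lip: "L-lipschitz_on UNIV H"
  shows "\<exists>\<phi>. \<phi> 0 = p \<and> (\<forall>t. (\<phi> has_vector_derivative H (\<phi> t)) (at t))"
proof -
  have lip1: "(L + 1)-lipschitz_on UNIV H" and lip1': "(L + 1)-lipschitz_on UNIV (\<lambda>q. - H q)"
    using lipschitz_on_mono[OF lip] lipschitz_on_minus by auto
  have L1: "0 < L + 1" using lipschitz_on_nonneg[OF lip] by simp
  obtain fwd where p1: "fwd 0 = p"
    and d1: "\<And>t. 0 \<le> t \<Longrightarrow> (fwd has_vector_derivative H (fwd t)) (at t within {0..})"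
    using lipschitz_ode_forward_solution[OF lip1 L1, where p = p] by (rule that)
  obtain bwd where p2: "bwd 0 = p"
    and d2: "\<And>t. 0 \<le> t \<Longrightarrow> (bwd has_vector_derivative - H (bwd t)) (at t within {0..})"
    using lipschitz_ode_forward_solution[OF lip1' L1, where p = p] by (rule that)
  have d2': "((\<lambda>t. bwd (- t)) has_vector_derivative H (bwd (- t))) (at t within {..0})" if "t \<le> 0" for t
  proof -
    have "(uminus has_vector_derivative - 1) (at t within {..0})"
      by (auto intro!: derivative_eq_intros)
    moreover have "(bwd has_vector_derivative - H (bwd (- t))) (at (- t) within uminus ` {..0})"
      using d2[of "- t"] that by (simp add: image_uminus_atMost)
    ultimately have "((bwd \<circ> uminus) has_vector_derivative (- 1) *\<^sub>R (- H (bwd (- t)))) (at t within {..0})"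
      by (rule vector_diff_chain_within)
    then show ?thesis by (simp add: o_def)
  qed
  define \<phi> where "\<phi> t = (if t \<in> {0..} then fwd t else bwd (- t))" for t
  have "((\<lambda>t. if t \<in> {0..} then fwd t else bwd (- t)) has_vector_derivative
      (if t \<in> {0..} then H (fwd t) else H (bwd (- t)))) (at t within UNIV)" for t
  proof (rule has_vector_derivative_If_within_closures[where T = "{..<0}"])
    show "(fwd has_vector_derivative H (fwd t)) (at t within {0..} \<union> closure {0..} \<inter> closure {..<0})"
      if "t \<in> {0..} \<union> closure {0..} \<inter> closure {..<0}"
      using that d1[of t] by (simp add: Un_absorb2)
    show "((\<lambda>t. bwd (- t)) has_vector_derivative H (bwd (- t))) (at t within {..<0} \<union> closure {0..} \<inter> closure {..<0})"
      if "t \<in> {..<0} \<union> closure {0..} \<inter> closure {..<0}"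
    proof -
      have "{..<0::real} \<union> closure {0..} \<inter> closure {..<0} = {..0}" by auto
      then show ?thesis using that d2'[of t] by auto
    qed
  qed (use p1 p2 in auto)
  then have "(\<phi> has_vector_derivative H (\<phi> t)) (at t)" for t
    unfolding \<phi>_def by (simp add: if_distrib[of H])
  moreover have "\<phi> 0 = p" unfolding \<phi>_def using p1 by simp
  ultimately show ?thesis by blast
qed

text \<open>Gronwall: \<open>u = |\<phi> - \<psi>|\<^sup>2\<close> satisfies \<open>|u'| \<le> 2 L u\<close>, so \<open>exp (- 2 L t) u\<close> decreases
  for \<open>t \<ge> 0\<close> and \<open>exp (2 L t) u\<close> increases for \<open>t \<le> 0\<close>.\<close>

lemma lipschitz_ode_unique:
  fixes H :: "'a::real_inner \<Rightarrow> 'a" and \<phi> \<psi> :: "real \<Rightarrow> 'a"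
  assumes lip: "L-lipschitz_on UNIV H"
    and \<phi>: "\<And>t. (\<phi> has_vector_derivative H (\<phi> t)) (at t)"
    and \<psi>: "\<And>t. (\<psi> has_vector_derivative H (\<psi> t)) (at t)"
    and init: "\<phi> 0 = \<psi> 0"
  shows "\<phi> t = \<psi> t"
proof -
  have L: "0 \<le> L" using lip by (rule lipschitz_on_nonneg)
  define d where "d s = \<phi> s - \<psi> s" for s
  define u where "u s = d s \<bullet> d s" for s
  define u' where "u' s = 2 * (d s \<bullet> (H (\<phi> s) - H (\<psi> s)))" for s
  have du: "(u has_real_derivative u' s) (at s)" for s
  proof -
    have "(d has_vector_derivative H (\<phi> s) - H (\<psi> s)) (at s)"
      unfolding d_def[abs_def] by (intro has_vector_derivative_diff \<phi> \<psi>)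
    then have "(d has_derivative (\<lambda>h. h *\<^sub>R (H (\<phi> s) - H (\<psi> s)))) (at s)"
      by (simp add: has_vector_derivative_def)
    from has_derivative_inner[OF this this] show ?thesis
      unfolding u_def[abs_def] u'_def
      by (rule has_derivative_imp_has_field_derivative) (simp add: inner_commute algebra_simps)
  qed
  have u'_bound: "\<bar>u' s\<bar> \<le> 2 * L * u s" for s
  proof -
    have "\<bar>u' s\<bar> \<le> 2 * (norm (d s) * norm (H (\<phi> s) - H (\<psi> s)))"
      unfolding u'_def using Cauchy_Schwarz_ineq2 by (simp add: abs_mult)
    also have "\<dots> \<le> 2 * (norm (d s) * (L * norm (d s)))"
      using lipschitz_on_normD[OF lip] unfolding d_def by (intro mult_left_mono) auto
    moreover have "norm (d s) * norm (d s) = u s"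
      unfolding u_def by (simp add: power2_norm_eq_inner[symmetric] power2_eq_square)
    ultimately show ?thesis by (simp add: algebra_simps)
  qed
  have u0: "u 0 = 0" unfolding u_def d_def using init by simp
  have "u t \<le> 0"
  proof (cases "0 \<le> t")
    case True
    have "exp (- (2 * L * t)) * u t \<le> exp (- (2 * L * 0)) * u 0"
    proof (rule DERIV_nonpos_imp_nonincreasing[OF True])
      fix s
      have "((\<lambda>s. exp (- (2 * L * s)) * u s) has_real_derivative exp (- (2 * L * s)) * (u' s - 2 * L * u s)) (at s)"
        by (auto intro!: derivative_eq_intros du simp: algebra_simps)
      moreover have "exp (- (2 * L * s)) * (u' s - 2 * L * u s) \<le> 0"
        using u'_bound[of s] by (intro mult_nonneg_nonpos) auto
      ultimately show "\<exists>y. ((\<lambda>s. exp (- (2 * L * s)) * u s) has_real_derivative y) (at s) \<and> y \<le> 0" by blast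
    qed
    then show ?thesis using u0 by (simp add: mult_le_0_iff)
  next
    case False
    have "exp (2 * L * t) * u t \<le> exp (2 * L * 0) * u 0"
    proof (rule DERIV_nonneg_imp_nondecreasing[of t 0 "\<lambda>s. exp (2 * L * s) * u s"])
      show "t \<le> 0" using False by simp
      fix s
      have "((\<lambda>s. exp (2 * L * s) * u s) has_real_derivative exp (2 * L * s) * (u' s + 2 * L * u s)) (at s)"
        by (auto intro!: derivative_eq_intros du simp: algebra_simps)
      moreover have "0 \<le> exp (2 * L * s) * (u' s + 2 * L * u s)"
        using u'_bound[of s] by (intro mult_nonneg_nonneg) auto
      ultimately show "\<exists>y. ((\<lambda>s. exp (2 * L * s) * u s) has_real_derivative y) (at s) \<and> 0 \<le> y" by blast
    qed
    then show ?thesis using u0 by (simp add: mult_le_0_iff)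
  qed
  then show ?thesis unfolding u_def d_def by (metis antisym inner_ge_zero inner_eq_zero_iff right_minus_eq)
qed

lemma flow2_solution:
  assumes lip: "L-lipschitz_on UNIV (\<lambda>q. (F (fst q) (snd q), G (fst q) (snd q)))"
  shows "flow2 F G p 0 = p" and "is_sol2 F G (flow2 F G p)"
proof -
  let ?H = "\<lambda>q. (F (fst q) (snd q), G (fst q) (snd q))"
  have sol_iff: "is_sol2 F G \<phi> \<longleftrightarrow> (\<forall>t. (\<phi> has_vector_derivative ?H (\<phi> t)) (at t))" for \<phi>
    unfolding is_sol2_def by simp
  obtain \<phi> where \<phi>0: "\<phi> 0 = p" and \<phi>: "\<forall>t. (\<phi> has_vector_derivative ?H (\<phi> t)) (at t)"
    using lipschitz_ode_solution_exists[OF lip, where p = p] by blast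
  have "(THE \<psi>. \<psi> 0 = p \<and> is_sol2 F G \<psi>) = \<phi>"
  proof (rule the_equality)
    show "\<phi> 0 = p \<and> is_sol2 F G \<phi>" using \<phi>0 \<phi> by (simp add: sol_iff)
    fix \<psi> assume \<psi>0: "\<psi> 0 = p \<and> is_sol2 F G \<psi>"
    then have \<psi>: "\<forall>t. (\<psi> has_vector_derivative ?H (\<psi> t)) (at t)" by (simp add: sol_iff)
    have "\<psi> t = \<phi> t" for t
      by (rule lipschitz_ode_unique[OF lip]) (use \<psi> \<phi> \<psi>0 \<phi>0 in auto)
    then show "\<psi> = \<phi>" ..
  qed
  then have "flow2 F G p = \<phi>" by (simp add: flow2_def fun_eq_iff)
  then show "flow2 F G p 0 = p" and "is_sol2 F G (flow2 F G p)" using \<phi>0 \<phi> by (simp_all add: sol_iff)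
qed

lemma lipschitz_on_fst: "1-lipschitz_on UNIV fst"
  by (rule lipschitz_onI) (auto simp: dist_fst_le)

lemma lipschitz_on_snd: "1-lipschitz_on UNIV snd"
  by (rule lipschitz_onI) (auto simp: dist_snd_le)

lemma lipschitz_field_on_diagonal:
  fixes f g :: "real \<Rightarrow> real \<Rightarrow> real \<Rightarrow> real"
  assumes f: "Lf-lipschitz_on UNIV (\<lambda>(x, y, z). f x y z)"
    and g: "Lg-lipschitz_on UNIV (\<lambda>(x, y, z). g x y z)"
  obtains L where "L-lipschitz_on UNIV (\<lambda>q. (f (fst q) (snd q) (fst q), g (fst q) (snd q) (fst q)))"
proof -
  obtain K where K: "K-lipschitz_on UNIV (\<lambda>q::real \<times> real. (fst q, snd q, fst q))"
    using lipschitz_on_Pair[OF lipschitz_on_fst lipschitz_on_Pair[OF lipschitz_on_snd lipschitz_on_fst]]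
    by blast
  have "(Lf * K)-lipschitz_on UNIV (\<lambda>q. f (fst q) (snd q) (fst q))"
    using lipschitz_on_compose2[OF K lipschitz_on_mono[OF f subset_UNIV order_refl]] by simp
  moreover have "(Lg * K)-lipschitz_on UNIV (\<lambda>q. g (fst q) (snd q) (fst q))"
    using lipschitz_on_compose2[OF K lipschitz_on_mono[OF g subset_UNIV order_refl]] by simp
  ultimately show ?thesis by (rule that[OF lipschitz_on_Pair])
qed

lemma has_vector_derivative_fstD:
  "(\<phi> has_vector_derivative v) F \<Longrightarrow> ((\<lambda>t. fst (\<phi> t)) has_real_derivative fst v) F"
  unfolding has_vector_derivative_def
  by (drule has_derivative_fst) (auto intro: has_derivative_imp_has_field_derivative)

lemma abs_increment_less_of_deriv_bound:
  fixes x x' :: "real \<Rightarrow> real"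
  assumes "a < b"
    and "\<And>t. (x has_real_derivative x' t) (at t)" and "\<And>t. \<bar>x' t\<bar> < M"
  shows "\<bar>x b - x a\<bar> < M * (b - a)"
proof -
  obtain \<xi> where "x b - x a = (b - a) * x' \<xi>"
    using MVT2[OF \<open>a < b\<close>, of x x'] assms(2) by blast
  then have "\<bar>x b - x a\<bar> = (b - a) * \<bar>x' \<xi>\<bar>" using \<open>a < b\<close> by (simp add: abs_mult)
  also have "\<dots> < (b - a) * M" using assms(1,3) by simp
  finally show ?thesis by (simp add: mult.commute)
qed

lemma flow2_diagonal_fst_speed:
  fixes f g :: "real \<Rightarrow> real \<Rightarrow> real \<Rightarrow> real"
  assumes lip_f: "\<exists>L. L-lipschitz_on UNIV (\<lambda>(x, y, z). f x y z)"
    and lip_g: "\<exists>L. L-lipschitz_on UNIV (\<lambda>(x, y, z). g x y z)"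
    and bd_f: "\<forall>x y z. \<bar>f x y z\<bar> < M" and "t < 0"
  shows "\<bar>fst p - fst (flow2 (\<lambda>x y. f x y x) (\<lambda>x y. g x y x) p t)\<bar> < M * (0 - t)"
proof -
  let ?\<phi> = "flow2 (\<lambda>x y. f x y x) (\<lambda>x y. g x y x) p"
  obtain Lf Lg where "Lf-lipschitz_on UNIV (\<lambda>(x, y, z). f x y z)" "Lg-lipschitz_on UNIV (\<lambda>(x, y, z). g x y z)"
    using lip_f lip_g by blast
  then obtain L where "L-lipschitz_on UNIV (\<lambda>q. (f (fst q) (snd q) (fst q), g (fst q) (snd q) (fst q)))"
    by (rule lipschitz_field_on_diagonal)
  then have \<phi>0: "?\<phi> 0 = p" and \<phi>: "is_sol2 (\<lambda>x y. f x y x) (\<lambda>x y. g x y x) ?\<phi>"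
    by (rule flow2_solution)+
  have "((\<lambda>s. fst (?\<phi> s)) has_real_derivative f (fst (?\<phi> s)) (snd (?\<phi> s)) (fst (?\<phi> s))) (at s)" for s
    using has_vector_derivative_fstD[OF \<phi>[unfolded is_sol2_def, rule_format, of s]] by simp
  then have "\<bar>fst (?\<phi> 0) - fst (?\<phi> t)\<bar> < M * (0 - t)"
    using bd_f by (intro abs_increment_less_of_deriv_bound[OF \<open>t < 0\<close>]) auto
  then show ?thesis using \<phi>0 by simp
qed


section \<open>The fast variable\<close>

text \<open>With \<open>E t = exp ((t - a) / \<epsilon>)\<close> one has \<open>(E w)' = E r\<close>, which is dominated by the
  derivative \<open>M E\<close> of \<open>M \<epsilon> E\<close>.\<close>

lemma exp_weighted_deviation_bound:
  fixes w r :: "real \<Rightarrow> real"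
  assumes \<epsilon>: "0 < \<epsilon>" and "a < b"
    and w: "\<And>t. a \<le> t \<Longrightarrow> t \<le> b \<Longrightarrow> (w has_real_derivative - w t / \<epsilon> + r t) (at t)"
    and r: "\<And>t. a \<le> t \<Longrightarrow> t \<le> b \<Longrightarrow> \<bar>r t\<bar> < M"
  shows "\<bar>exp ((b - a) / \<epsilon>) * w b - w a\<bar> < M * \<epsilon> * (exp ((b - a) / \<epsilon>) - 1)"
proof -
  define E where "E t = exp ((t - a) / \<epsilon>)" for t
  have deriv: "((\<lambda>t. E t * w t + c * M * \<epsilon> * E t) has_real_derivative E t * (r t + c * M)) (at t)"
    if "a \<le> t" "t \<le> b" for t c
  proof -
    have "((\<lambda>t. E t * w t + c * M * \<epsilon> * E t) has_real_derivative
        E t / \<epsilon> * w t + E t * (- w t / \<epsilon> + r t) + c * M * \<epsilon> * (E t / \<epsilon>)) (at t)"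
      using \<epsilon> unfolding E_def by (auto intro!: derivative_eq_intros w[OF that])
    then show ?thesis using \<epsilon> by (simp add: field_simps)
  qed
  have "E a * w a + 1 * M * \<epsilon> * E a < E b * w b + 1 * M * \<epsilon> * E b"
  proof (rule DERIV_pos_imp_increasing[OF \<open>a < b\<close>])
    fix t assume t: "a \<le> t" "t \<le> b"
    moreover have "0 < E t * (r t + 1 * M)" using r[OF t] by (simp add: E_def abs_less_iff)
    ultimately show "\<exists>y. ((\<lambda>t. E t * w t + 1 * M * \<epsilon> * E t) has_real_derivative y) (at t) \<and> 0 < y"
      using deriv by blast
  qed
  moreover have "E a * w a + (- 1) * M * \<epsilon> * E a > E b * w b + (- 1) * M * \<epsilon> * E b"
  proof (rule DERIV_neg_imp_decreasing[OF \<open>a < b\<close>])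
    fix t assume t: "a \<le> t" "t \<le> b"
    moreover have "E t * (r t + (- 1) * M) < 0" using r[OF t] by (simp add: E_def abs_less_iff mult_pos_neg)
    ultimately show "\<exists>y. ((\<lambda>t. E t * w t + (- 1) * M * \<epsilon> * E t) has_real_derivative y) (at t) \<and> y < 0"
      using deriv by blast
  qed
  moreover have "E a = 1" by (simp add: E_def)
  ultimately show ?thesis unfolding E_def by (simp add: abs_less_iff algebra_simps)
qed

lemma first_zero_after:
  fixes z :: "real \<Rightarrow> real"
  assumes cont: "continuous_on UNIV z" and "a < b" and "0 < d"
    and neg: "\<And>t. a < t \<Longrightarrow> t < a + d \<Longrightarrow> z t < 0"
  defines "\<theta> \<equiv> Inf ({b} \<union> {t. a < t \<and> z t = 0})"
  shows "a < \<theta>" and "\<theta> \<le> b" and "\<And>t. a < t \<Longrightarrow> t \<le> \<theta> \<Longrightarrow> z t \<le> 0"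
    and "\<theta> < b \<Longrightarrow> z \<theta> = 0"
proof -
  define Z where "Z = {t. a < t \<and> z t = 0}"
  have Z_ge: "a + d \<le> t" if "t \<in> Z" for t
    using neg[of t] that by (force simp: Z_def)
  have bdd: "bdd_below ({b} \<union> Z)" by (auto simp: Z_def intro: bdd_belowI[of _ a] less_imp_le \<open>a < b\<close>)
  have \<theta>_le: "\<theta> \<le> t" if "t \<in> {b} \<union> Z" for t
    unfolding \<theta>_def Z_def[symmetric] using cInf_lower[OF that bdd] .
  show "\<theta> \<le> b" by (rule \<theta>_le) simp
  have "min b (a + d) \<le> \<theta>"
    unfolding \<theta>_def Z_def[symmetric] by (rule cInf_greatest) (auto dest: Z_ge)
  then show "a < \<theta>" using \<open>a < b\<close> \<open>0 < d\<close> by linarith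
  show "z t \<le> 0" if t: "a < t" "t \<le> \<theta>" for t
  proof (rule ccontr)
    assume "\<not> z t \<le> 0"
    define c where "c = a + min (t - a) d / 2"
    have c: "a < c" "c < t" "c < a + d" using t \<open>0 < d\<close> unfolding c_def by (auto simp: min_def field_simps)
    then obtain r where r: "c \<le> r" "r \<le> t" "z r = 0"
      using IVT'[of z c 0 t] neg[of c] \<open>\<not> z t \<le> 0\<close> continuous_on_subset[OF cont] by force
    then have "\<theta> \<le> r" using c by (intro \<theta>_le) (simp add: Z_def)
    then have "r = t" using r t by linarith
    then show False using r \<open>\<not> z t \<le> 0\<close> by simp
  qed
  assume "\<theta> < b"
  then have Z_ne: "Z \<noteq> {}" unfolding \<theta>_def Z_def[symmetric] by auto
  have "Z = {t. a + d \<le> t} \<inter> {t. z t = 0}"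
    using Z_ge \<open>0 < d\<close> by (auto simp: Z_def)
  then have "closed Z" by (simp add: closed_Int closed_Collect_le closed_Collect_eq cont)
  then have "Inf Z \<in> Z" using Z_ne by (intro closed_contains_Inf) (auto simp: Z_def intro: bdd_belowI[of _ a] less_imp_le)
  moreover have "\<theta> = min b (Inf Z)"
    unfolding \<theta>_def Z_def[symmetric] using Z_ne
    by (subst cInf_union_distrib) (auto simp: Z_def inf_min intro: bdd_belowI[of _ a] less_imp_le)
  ultimately show "z \<theta> = 0" using \<open>\<theta> < b\<close> by (auto simp: Z_def)
qed

lemma fast_variable_deviation:
  fixes xe x' ze :: "real \<Rightarrow> real"
  assumes x: "\<And>t. (xe has_real_derivative x' t) (at t)" and x'_bound: "\<And>t. \<bar>x' t\<bar> < M"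
    and z: "\<And>t. (ze has_real_derivative (xe t + \<bar>ze t\<bar>) / \<epsilon>) (at t)"
    and "0 < \<epsilon>" and "\<tau> < s" and z_nonpos: "\<And>t. \<tau> \<le> t \<Longrightarrow> t \<le> s \<Longrightarrow> ze t \<le> 0"
  shows "\<bar>exp ((s - \<tau>) / \<epsilon>) * (ze s - xe s) - (ze \<tau> - xe \<tau>)\<bar> < M * \<epsilon> * (exp ((s - \<tau>) / \<epsilon>) - 1)"
proof (rule exp_weighted_deviation_bound[where r = "\<lambda>t. - x' t"])
  fix t assume t: "\<tau> \<le> t" "t \<le> s"
  have "((\<lambda>t. ze t - xe t) has_real_derivative (xe t + \<bar>ze t\<bar>) / \<epsilon> - x' t) (at t)"
    by (intro DERIV_diff z x)
  then show "((\<lambda>t. ze t - xe t) has_real_derivative - (ze t - xe t) / \<epsilon> + - x' t) (at t)"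
    using z_nonpos[OF t] by (simp add: diff_divide_distrib)
  show "\<bar>- x' t\<bar> < M" using x'_bound by simp
qed fact+

text \<open>\<open>ze = xe + (ze - xe)\<close>: the first term has drifted less than \<open>M (s - \<tau>)\<close> from \<open>x0\<close>,
  the second is close to \<open>- x0 exp (- (s - \<tau>) / \<epsilon>)\<close>, and the sum stays negative.\<close>

lemma fast_variable_stays_negative:
  fixes xe x' ze :: "real \<Rightarrow> real"
  assumes x: "\<And>t. (xe has_real_derivative x' t) (at t)" and x'_bound: "\<And>t. \<bar>x' t\<bar> < M"
    and z: "\<And>t. (ze has_real_derivative (xe t + \<bar>ze t\<bar>) / \<epsilon>) (at t)"
    and init: "xe \<tau> = x0" "ze \<tau> = 0" and "0 < \<epsilon>" and "\<tau> < s"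
    and room: "M * (s - \<tau> + 2 * \<epsilon>) \<le> - x0"
    and nonpos: "\<And>t. \<tau> \<le> t \<Longrightarrow> t \<le> s \<Longrightarrow> ze t \<le> 0"
  shows "ze s < 0"
proof -
  define r where "r = s - \<tau>"
  define e where "e = exp (r / \<epsilon>)"
  have M: "0 < M" using x'_bound[of 0] by linarith
  have Me: "0 < M * \<epsilon>" using M \<open>0 < \<epsilon>\<close> by simp
  have r: "0 < r" using \<open>\<tau> < s\<close> by (simp add: r_def)
  have e: "0 < e" "r / \<epsilon> \<le> e - 1" unfolding e_def using exp_ge_add_one_self[of "r / \<epsilon>"] by (simp, linarith)
  have deviation: "e * (ze s - xe s) < - x0 + M * \<epsilon> * (e - 1)"
    using fast_variable_deviation[OF x x'_bound z \<open>0 < \<epsilon>\<close> \<open>\<tau> < s\<close> nonpos] init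
    by (simp add: e_def r_def abs_less_iff)
  have "xe s < x0 + M * r"
    using abs_increment_less_of_deriv_bound[OF \<open>\<tau> < s\<close> x x'_bound] init by (simp add: r_def)
  then have drift: "e * xe s < e * (x0 + M * r)" using e(1) by simp
  have gap: "0 \<le> - x0 - 2 * M * \<epsilon> - M * r" using room by (simp add: r_def algebra_simps)
  have "(- x0 - M * \<epsilon> - M * r) * (r / \<epsilon>) \<le> (- x0 - M * \<epsilon> - M * r) * (e - 1)"
    using e gap Me by (intro mult_left_mono) auto
  moreover have "(- x0 - M * \<epsilon> - M * r) * (r / \<epsilon>) - M * r = r / \<epsilon> * (- x0 - 2 * M * \<epsilon> - M * r)"
    using \<open>0 < \<epsilon>\<close> by (simp add: field_simps)
  moreover have "0 \<le> r / \<epsilon> * (- x0 - 2 * M * \<epsilon> - M * r)" using gap r \<open>0 < \<epsilon>\<close> by simp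
  ultimately have "e * M * r \<le> (- x0 - M * \<epsilon>) * (e - 1)" by (simp add: algebra_simps)
  with deviation drift have "e * ze s < 0" by (simp add: algebra_simps)
  then show ?thesis using e(1) by (simp add: mult_less_0_iff)
qed

lemma fast_variable_tracks_x:
  fixes xe x' ze :: "real \<Rightarrow> real"
  assumes x: "\<And>t. (xe has_real_derivative x' t) (at t)" and x'_bound: "\<And>t. \<bar>x' t\<bar> < M"
    and z: "\<And>t. (ze has_real_derivative (xe t + \<bar>ze t\<bar>) / \<epsilon>) (at t)"
    and init: "xe \<tau> = x0" "ze \<tau> = 0" and "x0 < 0" and "0 < \<epsilon>"
    and t1_def: "t1 = \<tau> + \<epsilon> * ln (- x0 / (M * \<epsilon>))"
    and small: "M * \<epsilon> < - x0" "M * (t1 - \<tau> + 2 * \<epsilon>) \<le> - x0" "t1 < b"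
  shows "t1 < Inf ({b} \<union> {t. \<tau> < t \<and> ze t = 0})"
    and "\<And>t. t1 \<le> t \<Longrightarrow> t \<le> Inf ({b} \<union> {t. \<tau> < t \<and> ze t = 0}) \<Longrightarrow> \<bar>ze t - xe t\<bar> < 2 * M * \<epsilon>"
proof -
  define \<theta> where "\<theta> = Inf ({b} \<union> {t. \<tau> < t \<and> ze t = 0})"
  have M: "0 < M" using x'_bound[of 0] by linarith
  have Me: "0 < M * \<epsilon>" using M \<open>0 < \<epsilon>\<close> by simp
  have "1 < - x0 / (M * \<epsilon>)" using small(1) Me by (subst less_divide_eq) auto
  then have "\<tau> < t1" using \<open>0 < \<epsilon>\<close> by (simp add: t1_def)
  have "exp ((t1 - \<tau>) / \<epsilon>) = - x0 / (M * \<epsilon>)"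
    using \<open>1 < - x0 / (M * \<epsilon>)\<close> \<open>0 < \<epsilon>\<close> by (simp add: t1_def)
  then have exp_t1: "M * \<epsilon> * exp ((t1 - \<tau>) / \<epsilon>) = - x0" using Me by (auto simp: field_simps)
  have dev: "\<bar>exp ((s - \<tau>) / \<epsilon>) * (ze s - xe s) + x0\<bar> < M * \<epsilon> * (exp ((s - \<tau>) / \<epsilon>) - 1)"
    if "\<tau> < s" "\<And>t. \<tau> \<le> t \<Longrightarrow> t \<le> s \<Longrightarrow> ze t \<le> 0" for s
    using fast_variable_deviation[OF x x'_bound z \<open>0 < \<epsilon>\<close> that] init by simp
  have stays_negative: "ze s < 0"
    if "\<tau> < s" "s \<le> t1" "\<And>t. \<tau> \<le> t \<Longrightarrow> t \<le> s \<Longrightarrow> ze t \<le> 0" for s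
  proof (rule fast_variable_stays_negative[OF x x'_bound z init \<open>0 < \<epsilon>\<close> that(1) _ that(3)])
    have "M * (s - \<tau> + 2 * \<epsilon>) \<le> M * (t1 - \<tau> + 2 * \<epsilon>)" using \<open>s \<le> t1\<close> M by simp
    with small(2) show "M * (s - \<tau> + 2 * \<epsilon>) \<le> - x0" by linarith
  qed
  obtain d where "0 < d" and d: "\<And>h. 0 < h \<Longrightarrow> h < d \<Longrightarrow> ze (\<tau> + h) < 0"
    using has_real_derivative_neg_dec_right[OF z[of \<tau>]] init \<open>x0 < 0\<close> \<open>0 < \<epsilon>\<close>
    by (auto simp: divide_neg_pos)
  have cont: "continuous_on UNIV ze"
    using z by (meson DERIV_isCont continuous_at_imp_continuous_on)
  note first_zero = first_zero_after[OF cont \<open>\<tau> < t1\<close>[THEN less_trans, OF small(3)] \<open>0 < d\<close>,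
      folded \<theta>_def]
  have neg: "ze t < 0" if "\<tau> < t" "t < \<tau> + d" for t using d[of "t - \<tau>"] that by simp
  have nonpos: "ze t \<le> 0" if "\<tau> \<le> t" "t \<le> \<theta>" for t
    using first_zero(3)[OF neg] that init by (cases "t = \<tau>") auto
  show "t1 < \<theta>"
  proof (rule ccontr)
    assume "\<not> t1 < \<theta>"
    then have "ze \<theta> = 0" using first_zero(4)[OF neg] small(3) by simp
    moreover have "ze \<theta> < 0" using stays_negative[of \<theta>] first_zero(1)[OF neg] nonpos \<open>\<not> t1 < \<theta>\<close> by simp
    ultimately show False by simp
  qed
  fix t assume t: "t1 \<le> t" "t \<le> \<theta>"
  define e where "e = exp ((t - \<tau>) / \<epsilon>)"
  have "\<tau> < t" using \<open>\<tau> < t1\<close> t by simp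
  have e: "0 < e" by (simp add: e_def)
  have "- x0 \<le> M * \<epsilon> * e"
    unfolding exp_t1[symmetric] e_def using t Me \<open>0 < \<epsilon>\<close>
    by (intro mult_left_mono) (simp_all add: divide_right_mono)
  have "e * \<bar>ze t - xe t\<bar> = \<bar>(e * (ze t - xe t) + x0) - x0\<bar>" using e by (simp add: abs_mult)
  also have "\<dots> \<le> \<bar>e * (ze t - xe t) + x0\<bar> + \<bar>x0\<bar>" by (rule abs_triangle_ineq4)
  also have "\<dots> < M * \<epsilon> * (e - 1) + M * \<epsilon> * e"
    using dev[OF \<open>\<tau> < t\<close>] nonpos t \<open>- x0 \<le> M * \<epsilon> * e\<close> \<open>x0 < 0\<close> by (simp add: e_def)
  also have "\<dots> < e * (2 * M * \<epsilon>)" using Me by (simp add: algebra_simps)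
  finally have "e * \<bar>ze t - xe t\<bar> < e * (2 * M * \<epsilon>)" .
  then show "\<bar>ze t - xe t\<bar> < 2 * M * \<epsilon>" using e by simp
qed

lemma eventually_fast_time_scale_small:
  fixes k c :: real
  assumes "0 < k" and "0 < c"
  shows "\<forall>\<^sub>F \<epsilon> in at_right 0. 0 < \<epsilon> \<and> \<epsilon> < k \<and> \<epsilon> * ln (k / \<epsilon>) + 2 * \<epsilon> < min k c"
proof -
  have "((\<lambda>\<epsilon>. \<epsilon> * ln (k / \<epsilon>) + 2 * \<epsilon>) \<longlongrightarrow> 0) (at_right 0)"
    using \<open>0 < k\<close> by real_asymp
  then have "\<forall>\<^sub>F \<epsilon> in at_right 0. \<epsilon> * ln (k / \<epsilon>) + 2 * \<epsilon> < min k c"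
    using assms by (intro order_tendstoD(2)) auto
  moreover have "\<forall>\<^sub>F \<epsilon> in at_right 0. 0 < \<epsilon> \<and> \<epsilon> < k"
    using \<open>0 < k\<close> by (auto simp: eventually_at_right_field)
  ultimately show ?thesis by eventually_elim auto
qed

lemma fast_variable_near_slow_manifold:
  fixes f g :: "real \<Rightarrow> real \<Rightarrow> real \<Rightarrow> real"
  assumes bd_f: "\<forall>x y z. \<bar>f x y z\<bar> < M" and "x0 < 0" and "- x0 < M * T" and "\<tau> < b"
  shows "\<exists>\<epsilon>0>0. \<forall>\<epsilon>. 0 < \<epsilon> \<and> \<epsilon> < \<epsilon>0 \<longrightarrow>
           (\<forall>xe ye ze :: real \<Rightarrow> real.
              (\<forall>t. (xe has_real_derivative f (xe t) (ye t) (ze t)) (at t) \<and>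
                   (ye has_real_derivative g (xe t) (ye t) (ze t)) (at t) \<and>
                   (ze has_real_derivative (xe t + \<bar>ze t\<bar>) / \<epsilon>) (at t)) \<and>
              xe \<tau> = x0 \<and> ye \<tau> = y0 \<and> ze \<tau> = 0 \<longrightarrow>
              (let \<omega> = \<epsilon> * ln (T / \<epsilon>);
                   that = Inf ({b} \<union> {t. t > \<tau> \<and> ze t = 0});
                   t1 = \<tau> + \<epsilon> * ln (- x0 / (M * \<epsilon>))
               in t1 < \<tau> + \<omega> \<and> that > t1 \<and>
                  (\<forall>t. t1 \<le> t \<and> t \<le> that \<longrightarrow> \<bar>ze t - xe t\<bar> < 2 * M * \<epsilon>)))"
proof -
  have M: "0 < M" using bd_f by (metis abs_ge_zero le_less_trans)
  define k where "k = - x0 / M"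
  have k: "0 < k" "k < T" unfolding k_def using assms M by (simp_all add: field_simps)
  obtain \<epsilon>0 where "0 < \<epsilon>0"
    and small: "\<And>\<epsilon>. 0 < \<epsilon> \<Longrightarrow> \<epsilon> < \<epsilon>0 \<Longrightarrow> \<epsilon> < k \<and> \<epsilon> * ln (k / \<epsilon>) + 2 * \<epsilon> < min k (b - \<tau>)"
    using eventually_fast_time_scale_small[OF k(1), of "b - \<tau>"] \<open>\<tau> < b\<close>
    unfolding eventually_at_right_field by auto
  have conclusion: "let \<omega> = \<epsilon> * ln (T / \<epsilon>);
                   that = Inf ({b} \<union> {t. t > \<tau> \<and> ze t = 0});
                   t1 = \<tau> + \<epsilon> * ln (- x0 / (M * \<epsilon>))
               in t1 < \<tau> + \<omega> \<and> that > t1 \<and>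
                  (\<forall>t. t1 \<le> t \<and> t \<le> that \<longrightarrow> \<bar>ze t - xe t\<bar> < 2 * M * \<epsilon>)"
    if "0 < \<epsilon>" "\<epsilon> < \<epsilon>0"
      and sys: "\<forall>t. (xe has_real_derivative f (xe t) (ye t) (ze t)) (at t) \<and>
                   (ye has_real_derivative g (xe t) (ye t) (ze t)) (at t) \<and>
                   (ze has_real_derivative (xe t + \<bar>ze t\<bar>) / \<epsilon>) (at t)"
      and init: "xe \<tau> = x0" "ze \<tau> = 0" for \<epsilon> and xe ye ze :: "real \<Rightarrow> real"
  proof -
    define t1 where "t1 = \<tau> + \<epsilon> * ln (- x0 / (M * \<epsilon>))"
    have k_eps: "- x0 / (M * \<epsilon>) = k / \<epsilon>" by (simp add: k_def)
    have "\<epsilon> < k" and room: "\<epsilon> * ln (k / \<epsilon>) + 2 * \<epsilon> < min k (b - \<tau>)" using small[OF that(1,2)] by auto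
    have Mk: "M * k = - x0" using M by (simp add: k_def)
    have "M * \<epsilon> < - x0" using mult_strict_left_mono[OF \<open>\<epsilon> < k\<close> M] Mk by simp
    moreover have "M * (t1 - \<tau> + 2 * \<epsilon>) \<le> - x0"
      unfolding t1_def k_eps Mk[symmetric] using room M by (intro mult_left_mono) auto
    moreover have "t1 < b" unfolding t1_def k_eps using room \<open>0 < \<epsilon>\<close> by simp
    moreover have dx: "\<And>t. (xe has_real_derivative f (xe t) (ye t) (ze t)) (at t)"
      and dz: "\<And>t. (ze has_real_derivative (xe t + \<bar>ze t\<bar>) / \<epsilon>) (at t)" using sys by auto
    moreover have "\<And>t. \<bar>f (xe t) (ye t) (ze t)\<bar> < M" using bd_f by auto
    ultimately have "t1 < Inf ({b} \<union> {t. \<tau> < t \<and> ze t = 0})"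
      and "\<And>t. t1 \<le> t \<Longrightarrow> t \<le> Inf ({b} \<union> {t. \<tau> < t \<and> ze t = 0}) \<Longrightarrow> \<bar>ze t - xe t\<bar> < 2 * M * \<epsilon>"
      using fast_variable_tracks_x[OF dx _ dz init \<open>x0 < 0\<close> \<open>0 < \<epsilon>\<close> t1_def] by blast+
    moreover have "t1 < \<tau> + \<epsilon> * ln (T / \<epsilon>)"
      unfolding t1_def k_eps using k \<open>0 < \<epsilon>\<close> by (simp add: divide_strict_right_mono)
    ultimately show ?thesis unfolding Let_def t1_def[symmetric] by auto
  qed
  show ?thesis
    by (intro exI[of _ \<epsilon>0] conjI \<open>0 < \<epsilon>0\<close> allI impI, elim conjE) (rule conclusion; assumption)
qed

theorem proposition2:
  fixes f g :: "real \<Rightarrow> real \<Rightarrow> real \<Rightarrow> real"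
    and M Ta Tr \<tau> \<sigma> :: real
    and wa wr :: "real \<Rightarrow> real \<times> real"
  assumes lip_f: "\<exists>L. L-lipschitz_on UNIV (\<lambda>(x, y, z). f x y z)"
    and lip_g: "\<exists>L. L-lipschitz_on UNIV (\<lambda>(x, y, z). g x y z)"
    and bd_f: "\<forall>x y z. \<bar>f x y z\<bar> < M"
    and bd_g: "\<forall>x y z. \<bar>g x y z\<bar> < M"
    and f0: "f 0 0 0 = 0"
    and g0: "g 0 0 0 > 0"
    and fy: "\<forall>y. y \<noteq> 0 \<longrightarrow> y * f 0 y 0 < 0"
  defines "wa \<equiv> flow2 (\<lambda>x y. f x y x) (\<lambda>x y. g x y x) (0, 0)"
    and "wr \<equiv> flow2 (\<lambda>x y. f x y (- x)) (\<lambda>x y. g x y (- x)) (0, 0)"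
  assumes Ta: "Ta < \<tau>" and tau: "\<tau> < 0" and sigma: "0 < \<sigma>" and Tr: "\<sigma> < Tr"
    and neg_a: "\<forall>t. Ta < t \<and> t < 0 \<longrightarrow> fst (wa t) < 0"
    and neg_r: "\<forall>t. 0 < t \<and> t < Tr \<longrightarrow> fst (wr t) < 0"
    and meet: "wa \<tau> = wr \<sigma>"
    and A: "(let xs = fst (wa \<tau>); ys = snd (wa \<tau>) in
              f xs ys xs * g xs ys (- xs) - f xs ys (- xs) * g xs ys xs) \<noteq> 0"
  shows "\<exists>\<delta>>0. \<forall>(U :: (real \<times> real) set) (u :: real \<times> real \<Rightarrow> real) tu v tv.
     open U \<and> connected U \<and> wa \<tau> \<in> U \<and> U \<subseteq> ball (wa \<tau>) \<delta> \<and>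
     continuous_on U u \<and> continuous_on U tu \<and> continuous_on U v \<and> continuous_on U tv \<and>
     u (wa \<tau>) = 0 \<and> tu (wa \<tau>) = \<sigma> \<and> v (wa \<tau>) = 0 \<and> tv (wa \<tau>) = \<tau> \<and>
     (\<forall>p\<in>U. flow2 (\<lambda>x y. f x y x) (\<lambda>x y. g x y x) p (u p) = wr (tu p) \<and>
             flow2 (\<lambda>x y. f x y (- x)) (\<lambda>x y. g x y (- x)) p (v p) = wa (tv p))
     \<longrightarrow>
     (\<exists>\<alpha>0>0. \<forall>\<alpha>. 0 < \<alpha> \<and> \<alpha> < \<alpha>0 \<longrightarrow>
       (\<forall>x0 y0. (x0, y0) \<in> U \<and> \<bar>u (x0, y0)\<bar> < \<alpha> / 2 \<and> \<bar>v (x0, y0)\<bar> < \<alpha> / 2 \<longrightarrow>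
         (\<exists>\<epsilon>0>0. \<forall>\<epsilon>. 0 < \<epsilon> \<and> \<epsilon> < \<epsilon>0 \<longrightarrow>
           (\<forall>xe ye ze :: real \<Rightarrow> real.
              (\<forall>t. (xe has_real_derivative f (xe t) (ye t) (ze t)) (at t) \<and>
                   (ye has_real_derivative g (xe t) (ye t) (ze t)) (at t) \<and>
                   (ze has_real_derivative (xe t + \<bar>ze t\<bar>) / \<epsilon>) (at t)) \<and>
              xe \<tau> = x0 \<and> ye \<tau> = y0 \<and> ze \<tau> = 0 \<longrightarrow>
              (let T = - Ta + Tr;
                   \<omega> = \<epsilon> * ln (T / \<epsilon>);
                   that = Inf ({Tr} \<union> {t. t > \<tau> \<and> ze t = 0});
                   t1 = \<tau> + \<epsilon> * ln (- x0 / (M * \<epsilon>))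
               in t1 < \<tau> + \<omega> \<and> that > t1 \<and>
                  (\<forall>t. t1 \<le> t \<and> t \<le> that \<longrightarrow> \<bar>ze t - xe t\<bar> < 2 * M * \<epsilon>))))))"
proof -
  have M: "0 < M" using bd_f by (metis abs_ge_zero le_less_trans)
  define xs where "xs = fst (wa \<tau>)"
  have "xs < 0" unfolding xs_def using neg_a Ta tau by blast
  have "\<bar>0 - xs\<bar> < M * (0 - \<tau>)"
    using flow2_diagonal_fst_speed[OF lip_f lip_g bd_f tau, of "(0, 0)"] by (simp add: xs_def wa_def)
  moreover have "M * (0 - \<tau>) < M * (- Ta + Tr)" using M Ta sigma Tr by (intro mult_strict_left_mono) auto
  ultimately have "- xs < M * (- Ta + Tr)" by simp
  define \<delta> where "\<delta> = min (- xs) (M * (- Ta + Tr) + xs)"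
  have "0 < \<delta>" using \<open>xs < 0\<close> \<open>- xs < M * (- Ta + Tr)\<close> by (simp add: \<delta>_def)
  have near: "x0 < 0 \<and> - x0 < M * (- Ta + Tr)" if "(x0, y0) \<in> ball (wa \<tau>) \<delta>" for x0 y0
  proof -
    have "dist xs x0 < \<delta>" using that dist_fst_le[of "wa \<tau>" "(x0, y0)"] by (simp add: xs_def)
    then show ?thesis by (auto simp: \<delta>_def dist_real_def)
  qed
  have "\<tau> < Tr" using tau sigma Tr by simp
  note per_point = fast_variable_near_slow_manifold[OF bd_f _ _ this, of _ "- Ta + Tr"]
  show ?thesis
    unfolding Let_def
    apply (rule exI[of _ \<delta>], intro conjI allI impI \<open>0 < \<delta>\<close>)
    apply (rule exI[of _ "1::real"], intro conjI allI impI zero_less_one)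
    apply (rule per_point[unfolded Let_def])
    using near by blast+
qed

end
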